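(* Let $Y$ be a real random variable with $\chi^2(Y,\mathcal N)<\infty$, and let $J$ be a set of positive integers such that $\mathbb{E}H_n(Y)=0$ for all $n\in J$. If \[ \chi^2(Y,\mathcal N)<\inf_{x>0}\frac{(e^{x/2}-1)^2}{e^x-1-\sum_{n\in J}\frac{x^n}{n!}}, \] then $\mathbb{E}e^{tY}<e^{t^2}$ for all real $t\neq0$.
   Context: $\varphi(x)=e^{-x^2/2}/\sqrt{2\pi}$. For a real random variable $Y$ with density $p$, $\chi^2(Y,\mathcal N)=\int_{-\infty}^{\infty}\left(\frac{p(x)}{\varphi(x)}-1\right)^2\varphi(x)\,dx$ (taken to be $+\infty$ if $Y$ has no density). Hermite polynomials $H_n$ are defined by $\sum_{n\geqslant0}\frac{H_n(x)}{n!}z^n=e^{xz-z^2/2}$. *)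

theory Defs
  imports "HOL-Probability.Probability"
begin

definition std_normal_density :: "real \<Rightarrow> real" where
  "std_normal_density x = exp (- (x^2) / 2) / sqrt (2 * pi)"

text \<open>Hermite polynomials via the generating function
  sum_n H_n(x) z^n / n! = exp(x z - z^2/2): H_n(x) is the n-th z-derivative at z = 0.\<close>
definition hermite :: "nat \<Rightarrow> real \<Rightarrow> real" where
  "hermite n x = (deriv ^^ n) (\<lambda>z::real. exp (x * z - z^2 / 2)) 0"

definition chi2_density :: "(real \<Rightarrow> real) \<Rightarrow> ennreal" where
  "chi2_density p =
     (\<integral>\<^sup>+ x. ennreal ((p x / std_normal_density x - 1)^2 * std_normal_density x) \<partial>lborel)"

definition threshold_ratio :: "nat set \<Rightarrow> real \<Rightarrow> ennreal" where
  "threshold_ratio J x =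
     (let D = exp x - 1 - (\<Sum>n. if n \<in> J then x ^ n / fact n else 0)
      in if D = 0 then \<infinity> else ennreal ((exp (x/2) - 1)^2 / D))"

end

theory Submission
  imports Defs "HOL-Computational_Algebra.Polynomial"
begin

(* Fix t \<noteq> 0 and let P = (\<Sum>n\<in>K. t^n / n! * He_n) be a finite part of the Hermite expansion of
  exp (t y - t^2 / 2), where K consists of 0 and finitely many indices from J, and let
  h y = exp (t y) - exp (t^2 / 2) * P y. Because E He_n(Y) = 0 for n \<in> K - {0} and \<integral> h \<phi> = 0,
  E exp (t Y) - exp (t^2 / 2) = \<integral> h (p / \<phi> - 1) \<phi>, while orthogonality of the He_n gives
  \<integral> h^2 \<phi> = exp (t^2) * (exp (t^2) - (\<Sum>n\<in>K. t^(2n) / n!)). By Cauchy-Schwarz, the difference is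
  at most the square root of exp (t^2) * (exp (t^2) - (\<Sum>n\<in>K. t^(2n) / n!)) * \<chi>^2(Y, N), and the
  hypothesis on \<chi>^2 at x = t^2, with K large enough, makes this less than
  exp (t^2 / 2) * (exp (t^2 / 2) - 1) = exp (t^2) - exp (t^2 / 2). *)

lemma sq_le_of_quadratic_nonneg:
  fixes a b c :: real
  assumes "0 \<le> a" and nonneg: "\<And>s. 0 \<le> a * s^2 + 2 * b * s + c"
  shows "b^2 \<le> a * c"
proof (cases "a = 0")
  case True
  have "b = 0"
  proof (rule ccontr)
    assume "b \<noteq> 0"
    then show False
      using nonneg[of "- (c + 1) / (2 * b)"] True by (simp add: field_simps)
  qed
  with True show ?thesis
    by simp
next
  case False
  with \<open>0 \<le> a\<close> have "0 < a"
    by simp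
  have "0 \<le> a * (- b / a)^2 + 2 * b * (- b / a) + c"
    by (rule nonneg)
  also have "\<dots> = (a * c - b^2) / a"
    using \<open>0 < a\<close> by (simp add: power2_eq_square field_simps)
  finally show ?thesis
    using \<open>0 < a\<close> by (simp add: zero_le_divide_iff)
qed

lemma integrable_weighted_mult:
  fixes f g w :: "'a \<Rightarrow> real"
  assumes [measurable]: "f \<in> borel_measurable M" "g \<in> borel_measurable M" "w \<in> borel_measurable M"
    and "\<And>x. 0 \<le> w x"
    and "integrable M (\<lambda>x. f x ^ 2 * w x)" "integrable M (\<lambda>x. g x ^ 2 * w x)"
  shows "integrable M (\<lambda>x. f x * g x * w x)"
proof (rule Bochner_Integration.integrable_bound)
  show "integrable M (\<lambda>x. (f x ^ 2 * w x + g x ^ 2 * w x) / 2)"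
    using assms by simp
  have "norm (f x * g x * w x) \<le> norm ((f x ^ 2 * w x + g x ^ 2 * w x) / 2)" for x
  proof -
    have "2 * \<bar>f x\<bar> * \<bar>g x\<bar> * w x \<le> (\<bar>f x\<bar>^2 + \<bar>g x\<bar>^2) * w x"
      using sum_squares_bound \<open>0 \<le> w x\<close> by (rule mult_right_mono)
    with \<open>0 \<le> w x\<close> show ?thesis
      by (simp add: abs_mult algebra_simps)
  qed
  then show "AE x in M. norm (f x * g x * w x) \<le> norm ((f x ^ 2 * w x + g x ^ 2 * w x) / 2)"
    by simp
qed measurable

lemma Cauchy_Schwarz_weighted_integral:
  fixes f g w :: "'a \<Rightarrow> real"
  assumes [measurable]: "f \<in> borel_measurable M" "g \<in> borel_measurable M" "w \<in> borel_measurable M"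
    and "\<And>x. 0 \<le> w x"
    and "integrable M (\<lambda>x. f x ^ 2 * w x)" "integrable M (\<lambda>x. g x ^ 2 * w x)"
  shows "(\<integral>x. f x * g x * w x \<partial>M)^2 \<le> (\<integral>x. f x ^ 2 * w x \<partial>M) * (\<integral>x. g x ^ 2 * w x \<partial>M)"
proof (rule sq_le_of_quadratic_nonneg)
  show "0 \<le> (\<integral>x. f x ^ 2 * w x \<partial>M)"
    using assms by (simp add: integral_nonneg_AE)
  fix s
  have fgw: "integrable M (\<lambda>x. f x * g x * w x)"
    by (rule integrable_weighted_mult) (use assms in auto)
  have "has_bochner_integral M
      (\<lambda>x. s^2 * (f x ^ 2 * w x) + 2 * s * (f x * g x * w x) + g x ^ 2 * w x)
      (s^2 * (\<integral>x. f x ^ 2 * w x \<partial>M) + 2 * s * (\<integral>x. f x * g x * w x \<partial>M)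
        + (\<integral>x. g x ^ 2 * w x \<partial>M))"
    using assms fgw by (intro has_bochner_integral_add has_bochner_integral_mult_right
        has_bochner_integral_integrable)
  moreover have "(\<lambda>x. s^2 * (f x ^ 2 * w x) + 2 * s * (f x * g x * w x) + g x ^ 2 * w x) =
      (\<lambda>x. (s * f x + g x)^2 * w x)"
    by (simp add: power2_eq_square algebra_simps)
  ultimately have "(\<integral>x. (s * f x + g x)^2 * w x \<partial>M) = (\<integral>x. f x ^ 2 * w x \<partial>M) * s^2
      + 2 * (\<integral>x. f x * g x * w x \<partial>M) * s + (\<integral>x. g x ^ 2 * w x \<partial>M)"
    by (simp add: has_bochner_integral_iff mult_ac)
  moreover have "0 \<le> (\<integral>x. (s * f x + g x)^2 * w x \<partial>M)"
    using assms by (simp add: integral_nonneg_AE)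
  ultimately show "0 \<le> (\<integral>x. f x ^ 2 * w x \<partial>M) * s^2
      + 2 * (\<integral>x. f x * g x * w x \<partial>M) * s + (\<integral>x. g x ^ 2 * w x \<partial>M)"
    by simp
qed

lemma borel_measurable_poly [measurable]: "poly (q :: real poly) \<in> borel_measurable borel"
  by (rule borel_measurable_continuous_onI[OF continuous_on_poly[OF continuous_on_id]])

lemma nn_integral_distributed_eq_integral:
  fixes f p :: "real \<Rightarrow> real"
  assumes "distributed M lborel Y (\<lambda>x. ennreal (p x))" "\<And>x. 0 \<le> p x"
    and [measurable]: "f \<in> borel_measurable borel" and "\<And>x. 0 \<le> f x"
    and "integrable lborel (\<lambda>y. f y * p y)"
  shows "(\<integral>\<^sup>+\<omega>. ennreal (f (Y \<omega>)) \<partial>M) = ennreal (\<integral>y. f y * p y \<partial>lborel)"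
proof -
  have "(\<integral>\<^sup>+\<omega>. ennreal (f (Y \<omega>)) \<partial>M) = (\<integral>\<^sup>+y. ennreal (f y * p y) \<partial>lborel)"
    using distributed_nn_integral[OF assms(1), of "\<lambda>y. ennreal (f y)"] assms(2,4)
    by (simp add: ennreal_mult'' mult.commute)
  also have "\<dots> = ennreal (\<integral>y. f y * p y \<partial>lborel)"
    using assms(2,4,5) by (simp add: nn_integral_eq_integral)
  finally show ?thesis .
qed

fun hermite_poly :: "nat \<Rightarrow> real poly" where
  "hermite_poly 0 = 1"
| "hermite_poly (Suc 0) = [:0, 1:]"
| "hermite_poly (Suc (Suc n)) =
     [:0, 1:] * hermite_poly (Suc n) - smult (real (Suc n)) (hermite_poly n)"

lemma pderiv_hermite_poly:
  "pderiv (hermite_poly (Suc n)) = smult (real (Suc n)) (hermite_poly n)"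
proof (induction n rule: hermite_poly.induct)
  case (3 m)
  let ?H = hermite_poly
  have "pderiv (?H (Suc (Suc (Suc m)))) =
      ?H (Suc (Suc m)) + smult (real (Suc (Suc m)))
        ([:0, 1:] * ?H (Suc m) - smult (real (Suc m)) (?H m))"
    using 3
    by (simp add: hermite_poly.simps(3)[of "Suc m"] pderiv_mult pderiv_diff pderiv_smult pderiv_pCons
        smult_diff_right algebra_simps del: hermite_poly.simps)
  also have "\<dots> = ?H (Suc (Suc m)) + smult (real (Suc (Suc m))) (?H (Suc (Suc m)))"
    by simp
  also have "\<dots> = smult (real (Suc (Suc (Suc m)))) (?H (Suc (Suc m)))"
    by (metis add.commute of_nat_Suc smult_1_left smult_add_left)
  finally show ?case .
qed (simp_all add: pderiv_mult pderiv_pCons algebra_simps numeral_2_eq_2)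

lemma hermite_poly_Suc: "hermite_poly (Suc n) = [:0, 1:] * hermite_poly n - pderiv (hermite_poly n)"
  by (cases n) (simp_all add: pderiv_hermite_poly)

lemma higher_deriv_hermite_generating_function:
  "(deriv ^^ n) (\<lambda>z. exp (y * z - z^2 / 2)) =
     (\<lambda>z. poly (hermite_poly n) (y - z) * exp (y * z - z^2 / 2))"
proof (induction n)
  case (Suc n)
  have "((\<lambda>z. poly (hermite_poly n) (y - z) * exp (y * z - z^2 / 2)) has_real_derivative
      poly (hermite_poly (Suc n)) (y - z) * exp (y * z - z^2 / 2)) (at z)" for z
    by (rule derivative_eq_intros DERIV_chain2[OF poly_DERIV] | simp)+
       (simp add: hermite_poly_Suc algebra_simps)
  then have "deriv (\<lambda>z. poly (hermite_poly n) (y - z) * exp (y * z - z^2 / 2)) =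
      (\<lambda>z. poly (hermite_poly (Suc n)) (y - z) * exp (y * z - z^2 / 2))"
    by (intro ext DERIV_imp_deriv)
  with Suc.IH show ?case
    by simp
qed simp

lemma hermite_eq_poly: "hermite n y = poly (hermite_poly n) y"
  by (simp add: hermite_def higher_deriv_hermite_generating_function)

(* Defs.std_normal_density shadows the library abbreviation std_normal_density. *)
abbreviation \<phi> :: "real \<Rightarrow> real" where
  "\<phi> \<equiv> normal_density 0 1"

lemma std_normal_density_eq_normal_density: "Defs.std_normal_density x = \<phi> x"
  by (simp add: Defs.std_normal_density_def normal_density_def)

lemma std_normal_moment_Suc_Suc:
  "(\<integral>y. \<phi> y * y ^ Suc (Suc k) \<partial>lborel) = real (Suc k) * (\<integral>y. \<phi> y * y ^ k \<partial>lborel)"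
proof (cases "even k")
  case True
  then obtain j where k: "k = 2 * j" by (auto elim: evenE)
  have "fact (2 * Suc j) = real (2 * j + 2) * real (2 * j + 1) * (fact (2 * j) :: real)"
    by (simp add: fact_Suc)
  then have "fact (2 * Suc j) / (2 ^ Suc j * fact (Suc j)) =
      real (Suc k) * (fact (2 * j) / (2 ^ j * fact j) :: real)"
    by (simp add: k divide_simps)
  then show ?thesis
    using integral_std_normal_moment_even[of "Suc j"] integral_std_normal_moment_even[of j]
    by (simp add: k)
next
  case False
  then obtain j where k: "k = 2 * j + 1" by (auto elim: oddE)
  then show ?thesis
    using integral_std_normal_moment_odd[of "Suc j"] integral_std_normal_moment_odd[of j] by simp
qed

lemma integrable_poly_std_normal: "integrable lborel (\<lambda>y. poly q y * \<phi> y)"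
proof -
  have "(\<lambda>y. poly q y * \<phi> y) = (\<lambda>y. \<Sum>i\<le>degree q. coeff q i * (\<phi> y * y ^ i))"
    by (simp add: poly_altdef sum_distrib_left mult_ac)
  then show ?thesis
    by (simp add: integrable_std_normal_moment)
qed

lemma integrable_poly_sq_std_normal: "integrable lborel (\<lambda>y. poly q y ^ 2 * \<phi> y)"
  using integrable_poly_std_normal[of "q * q"] by (simp add: power2_eq_square)

lemma integral_poly_std_normal:
  assumes "degree q \<le> N"
  shows "(\<integral>y. poly q y * \<phi> y \<partial>lborel) = (\<Sum>i\<le>N. coeff q i * (\<integral>y. \<phi> y * y ^ i \<partial>lborel))"
proof -
  have "poly q y = (\<Sum>i\<le>N. coeff q i * y ^ i)" for y
    unfolding poly_altdef using assms
    by (intro sum.mono_neutral_left) (auto simp: coeff_eq_0)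
  then have "(\<integral>y. poly q y * \<phi> y \<partial>lborel) =
      (\<integral>y. (\<Sum>i\<le>N. coeff q i * (\<phi> y * y ^ i)) \<partial>lborel)"
    by (simp add: sum_distrib_left mult_ac)
  also have "\<dots> = (\<Sum>i\<le>N. coeff q i * (\<integral>y. \<phi> y * y ^ i \<partial>lborel))"
    by (simp add: integrable_std_normal_moment)
  finally show ?thesis .
qed

lemma integral_poly_std_normal_pCons:
  "(\<integral>y. poly (pCons 0 q) y * \<phi> y \<partial>lborel) = (\<integral>y. poly (pderiv q) y * \<phi> y \<partial>lborel)"
proof -
  define d where "d = degree q"
  define m where "m i = (\<integral>y. \<phi> y * y ^ i \<partial>lborel)" for i
  have m_Suc_Suc: "m (Suc (Suc i)) = real (Suc i) * m i" for i
    unfolding m_def by (rule std_normal_moment_Suc_Suc)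
  have "(\<integral>y. poly (pCons 0 q) y * \<phi> y \<partial>lborel) = (\<Sum>i\<le>Suc (Suc d). coeff (pCons 0 q) i * m i)"
    unfolding m_def by (rule integral_poly_std_normal) (simp add: d_def degree_pCons_le)
  also have "\<dots> = (\<Sum>i\<le>Suc d. coeff q i * m (Suc i))"
    by (subst sum.atMost_Suc_shift) simp
  also have "\<dots> = (\<Sum>i\<le>d. coeff q (Suc i) * m (Suc (Suc i)))"
    using integral_std_normal_moment_odd[of 0] by (subst sum.atMost_Suc_shift) (simp add: m_def)
  also have "\<dots> = (\<Sum>i\<le>d. coeff (pderiv q) i * m i)"
    by (simp add: coeff_pderiv m_Suc_Suc mult_ac)
  also have "\<dots> = (\<integral>y. poly (pderiv q) y * \<phi> y \<partial>lborel)"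
    unfolding m_def by (rule integral_poly_std_normal[symmetric]) (simp add: d_def degree_pderiv)
  finally show ?thesis .
qed

definition gauss_exp_poly :: "real \<Rightarrow> real poly \<Rightarrow> real" where
  "gauss_exp_poly t q = (\<integral>y. exp (t * y) * poly q y * \<phi> y \<partial>lborel)"

lemma exp_mult_std_normal_density: "exp (t * y) * \<phi> y = exp (t^2 / 2) * \<phi> (y - t)"
proof -
  have "t * y + - (y^2) / 2 = t^2 / 2 + - ((y - t)^2) / 2"
    by (simp add: power2_eq_square field_simps)
  then have "exp (t * y) * exp (- (y^2) / 2) = exp (t^2 / 2) * exp (- ((y - t)^2) / 2)"
    by (simp only: mult_exp_exp)
  then show ?thesis
    unfolding normal_density_def by (simp add: mult_ac)
qed

lemma gauss_exp_poly_integrand_eq: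
  "exp (t * y) * poly q y * \<phi> y = exp (t^2 / 2) * (poly q y * \<phi> (y - t))"
  using exp_mult_std_normal_density[of t y] by (simp add: algebra_simps)

lemma integrable_gauss_exp_poly: "integrable lborel (\<lambda>y. exp (t * y) * poly q y * \<phi> y)"
proof -
  have "integrable lborel (\<lambda>x. poly q (t + 1 * x) * \<phi> (t + 1 * x - t))"
    using integrable_poly_std_normal[of "q \<circ>\<^sub>p [:t, 1:]"] by (simp add: poly_pcompose algebra_simps)
  then have "integrable lborel (\<lambda>y. poly q y * \<phi> (y - t))"
    by (subst (asm) lborel_integrable_real_affine_iff) auto
  then show ?thesis
    by (simp add: gauss_exp_poly_integrand_eq)
qed

lemma has_bochner_integral_gauss_exp_poly:
  "has_bochner_integral lborel (\<lambda>y. exp (t * y) * poly q y * \<phi> y) (gauss_exp_poly t q)"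
  unfolding gauss_exp_poly_def
  by (rule has_bochner_integral_integrable[OF integrable_gauss_exp_poly])

lemma gauss_exp_poly_shift:
  "gauss_exp_poly t q = exp (t^2 / 2) * gauss_exp_poly 0 (q \<circ>\<^sub>p [:t, 1:])"
proof -
  have "gauss_exp_poly t q = exp (t^2 / 2) * (\<integral>y. poly q y * \<phi> (y - t) \<partial>lborel)"
    by (simp add: gauss_exp_poly_def gauss_exp_poly_integrand_eq)
  also have "(\<integral>y. poly q y * \<phi> (y - t) \<partial>lborel) =
      (\<integral>x. poly q (t + 1 * x) * \<phi> (t + 1 * x - t) \<partial>lborel)"
    using lborel_integral_real_affine[of 1 "\<lambda>y. poly q y * \<phi> (y - t)" t] by simp
  also have "\<dots> = gauss_exp_poly 0 (q \<circ>\<^sub>p [:t, 1:])"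
    by (simp add: gauss_exp_poly_def poly_pcompose algebra_simps)
  finally show ?thesis .
qed

lemma gauss_exp_poly_add: "gauss_exp_poly t (q + r) = gauss_exp_poly t q + gauss_exp_poly t r"
  unfolding gauss_exp_poly_def
  by (simp add: distrib_left distrib_right integrable_gauss_exp_poly)

lemma gauss_exp_poly_diff: "gauss_exp_poly t (q - r) = gauss_exp_poly t q - gauss_exp_poly t r"
  unfolding gauss_exp_poly_def
  by (simp add: left_diff_distrib right_diff_distrib integrable_gauss_exp_poly)

lemma gauss_exp_poly_smult: "gauss_exp_poly t (smult c q) = c * gauss_exp_poly t q"
  unfolding gauss_exp_poly_def by (simp add: mult_ac)

lemma gauss_exp_poly_0 [simp]: "gauss_exp_poly t 0 = 0"
  by (simp add: gauss_exp_poly_def)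

lemma gauss_exp_poly_sum:
  "gauss_exp_poly t (\<Sum>i\<in>A. f i) = (\<Sum>i\<in>A. gauss_exp_poly t (f i))"
  by (induction A rule: infinite_finite_induct) (simp_all add: gauss_exp_poly_add)

lemma gauss_exp_poly_one: "gauss_exp_poly t 1 = exp (t^2 / 2)"
proof -
  have "gauss_exp_poly 0 1 = 1"
    using integral_std_normal_moment_even[of 0] by (simp add: gauss_exp_poly_def)
  then show ?thesis
    by (simp add: gauss_exp_poly_shift[of t] pcompose_1)
qed

lemma gauss_exp_poly_pCons:
  "gauss_exp_poly t (pCons 0 q) = gauss_exp_poly t (pderiv q) + t * gauss_exp_poly t q"
proof -
  define r where "r = q \<circ>\<^sub>p [:t, 1:]"
  have "pCons 0 q \<circ>\<^sub>p [:t, 1:] = pCons 0 r + smult t r"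
    by (simp add: r_def pcompose_pCons algebra_simps)
  moreover have "pderiv q \<circ>\<^sub>p [:t, 1:] = pderiv r"
    by (simp add: r_def pderiv_pcompose pderiv_pCons)
  moreover have "gauss_exp_poly 0 (pCons 0 r) = gauss_exp_poly 0 (pderiv r)"
    using integral_poly_std_normal_pCons[of r] by (simp add: gauss_exp_poly_def)
  ultimately show ?thesis
    by (simp add: gauss_exp_poly_shift[of t] gauss_exp_poly_add gauss_exp_poly_smult
        r_def[symmetric] algebra_simps)
qed

lemma gauss_exp_poly_hermite_Suc_mult:
  "gauss_exp_poly t (hermite_poly (Suc n) * q) =
     gauss_exp_poly t (hermite_poly n * pderiv q) + t * gauss_exp_poly t (hermite_poly n * q)"
proof -
  let ?H = "hermite_poly n"
  have "hermite_poly (Suc n) * q = pCons 0 (?H * q) - pderiv ?H * q"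
    by (simp add: hermite_poly_Suc algebra_simps)
  moreover have "pderiv (?H * q) = ?H * pderiv q + pderiv ?H * q"
    by (simp add: pderiv_mult mult.commute)
  ultimately show ?thesis
    by (simp add: gauss_exp_poly_diff gauss_exp_poly_pCons gauss_exp_poly_add)
qed

lemma gauss_exp_poly_hermite: "gauss_exp_poly t (hermite_poly n) = t ^ n * exp (t^2 / 2)"
proof (induction n)
  case (Suc n)
  then show ?case
    using gauss_exp_poly_hermite_Suc_mult[of t n 1] by simp
qed (simp add: gauss_exp_poly_one)

lemma gauss_exp_poly_0_hermite_mult:
  "gauss_exp_poly 0 (hermite_poly n * q) = gauss_exp_poly 0 ((pderiv ^^ n) q)"
proof (induction n arbitrary: q)
  case (Suc n)
  then show ?case
    using gauss_exp_poly_hermite_Suc_mult[of 0 n q]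
    by (simp add: funpow_Suc_right del: funpow.simps)
qed simp

lemma higher_pderiv_hermite_poly:
  "(pderiv ^^ k) (hermite_poly (m + k)) = smult (fact (m + k) / fact m) (hermite_poly m)"
proof (induction k)
  case (Suc k)
  have "(pderiv ^^ Suc k) (hermite_poly (m + Suc k)) =
      (pderiv ^^ k) (pderiv (hermite_poly (Suc (m + k))))"
    by (simp add: funpow_Suc_right del: funpow.simps)
  also have "\<dots> = smult (real (Suc (m + k)) * (fact (m + k) / fact m)) (hermite_poly m)"
    by (simp add: pderiv_hermite_poly higher_pderiv_smult Suc)
  finally show ?case
    by simp
qed simp

lemma higher_pderiv_hermite_poly_self: "(pderiv ^^ n) (hermite_poly n) = [:fact n:]"
  using higher_pderiv_hermite_poly[of n 0] by simp

lemma higher_pderiv_hermite_poly_eq_0: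
  assumes "m < k"
  shows "(pderiv ^^ k) (hermite_poly m) = 0"
proof -
  obtain j where k: "k = Suc j + m"
    using less_imp_Suc_add[OF assms] by auto
  then have "(pderiv ^^ k) (hermite_poly m) =
      (pderiv ^^ j) (pderiv ((pderiv ^^ m) (hermite_poly m)))"
    by (simp only: funpow_add funpow_Suc_right comp_apply)
  then show ?thesis
    by (simp add: higher_pderiv_hermite_poly_self pderiv_pCons)
qed

lemma gauss_exp_poly_0_hermite_orthogonal:
  "gauss_exp_poly 0 (hermite_poly n * hermite_poly m) = (if n = m then fact n else 0)"
proof -
  have "gauss_exp_poly 0 (hermite_poly n * hermite_poly m) = (if n = m then fact n else 0)"
    if "m \<le> n" for m n
  proof (cases "m = n")
    case True
    then show ?thesis
      by (simp add: gauss_exp_poly_0_hermite_mult higher_pderiv_hermite_poly_self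
          gauss_exp_poly_smult gauss_exp_poly_one flip: smult_one)
  next
    case False
    with that show ?thesis
      by (simp add: gauss_exp_poly_0_hermite_mult higher_pderiv_hermite_poly_eq_0)
  qed
  then show ?thesis
    by (metis mult.commute nat_le_linear)
qed

(* Partial sum over K of the Hermite expansion exp (t y - t^2 / 2) = (\<Sum>n. t^n / n! * He_n y). *)
definition hermite_exp_partial :: "nat set \<Rightarrow> real \<Rightarrow> real poly" where
  "hermite_exp_partial K t = (\<Sum>n\<in>K. smult (t ^ n / fact n) (hermite_poly n))"

lemma gauss_exp_poly_hermite_exp_partial:
  "gauss_exp_poly t (hermite_exp_partial K t) = exp (t^2 / 2) * (\<Sum>n\<in>K. (t^2) ^ n / fact n)"
  by (simp add: hermite_exp_partial_def gauss_exp_poly_sum gauss_exp_poly_smult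
      gauss_exp_poly_hermite sum_distrib_left power_mult_distrib power2_eq_square mult_ac)

lemma gauss_exp_poly_0_hermite_exp_partial:
  assumes "finite K" "0 \<in> K"
  shows "gauss_exp_poly 0 (hermite_exp_partial K t) = 1"
proof -
  have "gauss_exp_poly 0 (hermite_exp_partial K t) = (\<Sum>n\<in>K. t ^ n / fact n * 0 ^ n)"
    by (simp add: hermite_exp_partial_def gauss_exp_poly_sum gauss_exp_poly_smult
        gauss_exp_poly_hermite)
  also have "\<dots> = (\<Sum>n\<in>K. if n = 0 then 1 else 0)"
    by (intro sum.cong) simp_all
  finally show ?thesis
    using assms by simp
qed

lemma gauss_exp_poly_0_hermite_exp_partial_sq:
  assumes "finite K"
  shows "gauss_exp_poly 0 (hermite_exp_partial K t * hermite_exp_partial K t) =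
    (\<Sum>n\<in>K. (t^2) ^ n / fact n)"
proof -
  have "gauss_exp_poly 0 (hermite_exp_partial K t * hermite_exp_partial K t) =
      (\<Sum>n\<in>K. \<Sum>m\<in>K. t ^ m * t ^ n * (if n = m then fact n else 0) / (fact m * fact n))"
    by (simp add: hermite_exp_partial_def sum_product gauss_exp_poly_sum gauss_exp_poly_smult
        gauss_exp_poly_0_hermite_orthogonal)
  also have "\<dots> = (\<Sum>n\<in>K. (t^2) ^ n / fact n)"
  proof (intro sum.cong refl)
    fix n assume "n \<in> K"
    have "(\<Sum>m\<in>K. t ^ m * t ^ n * (if n = m then fact n else 0) / (fact m * fact n)) =
        (\<Sum>m\<in>K. if m = n then (t^2) ^ n / fact n else 0)"
      by (intro sum.cong refl) (simp add: power_mult_distrib power2_eq_square)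
    with \<open>n \<in> K\<close> assms show "(\<Sum>m\<in>K. t ^ m * t ^ n * (if n = m then fact n else 0) /
        (fact m * fact n)) = (t^2) ^ n / fact n"
      by simp
  qed
  finally show ?thesis .
qed

definition hermite_exp_residual :: "nat set \<Rightarrow> real \<Rightarrow> real \<Rightarrow> real" where
  "hermite_exp_residual K t y = exp (t * y) - exp (t^2 / 2) * poly (hermite_exp_partial K t) y"

lemma borel_measurable_hermite_exp_residual [measurable]:
  "hermite_exp_residual K t \<in> borel_measurable borel"
  unfolding hermite_exp_residual_def[abs_def] by measurable

lemma
  fixes t :: real and K :: "nat set"
  assumes "finite K" "0 \<in> K"
  shows has_bochner_integral_hermite_exp_residual:
      "has_bochner_integral lborel (\<lambda>y. hermite_exp_residual K t y * \<phi> y) 0"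
    and has_bochner_integral_hermite_exp_residual_sq:
      "has_bochner_integral lborel (\<lambda>y. hermite_exp_residual K t y ^ 2 * \<phi> y)
        (exp (t^2) * (exp (t^2) - (\<Sum>n\<in>K. (t^2) ^ n / fact n)))"
proof -
  let ?P = "hermite_exp_partial K t"
  have "has_bochner_integral lborel
      (\<lambda>y. exp (t * y) * poly 1 y * \<phi> y - exp (t^2 / 2) * (exp (0 * y) * poly ?P y * \<phi> y))
      (gauss_exp_poly t 1 - exp (t^2 / 2) * gauss_exp_poly 0 ?P)"
    by (intro has_bochner_integral_diff has_bochner_integral_mult_right
        has_bochner_integral_gauss_exp_poly)
  then show "has_bochner_integral lborel (\<lambda>y. hermite_exp_residual K t y * \<phi> y) 0"
    using assms
    by (simp add: hermite_exp_residual_def gauss_exp_poly_one gauss_exp_poly_0_hermite_exp_partial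
        algebra_simps)
  have "has_bochner_integral lborel
      (\<lambda>y. exp ((2 * t) * y) * poly 1 y * \<phi> y - 2 * exp (t^2 / 2) * (exp (t * y) * poly ?P y * \<phi> y)
        + exp (t^2) * (exp (0 * y) * poly (?P * ?P) y * \<phi> y))
      (gauss_exp_poly (2 * t) 1 - 2 * exp (t^2 / 2) * gauss_exp_poly t ?P
        + exp (t^2) * gauss_exp_poly 0 (?P * ?P))"
    by (intro has_bochner_integral_add has_bochner_integral_diff has_bochner_integral_mult_right
        has_bochner_integral_gauss_exp_poly)
  moreover have "exp ((2 * t) * y) = exp (t * y) * exp (t * y)" for y
    by (simp add: mult_exp_exp)
  moreover have "exp ((2 * t)^2 / 2) = exp (t^2) * exp (t^2)"
    and "exp (t^2) = exp (t^2 / 2) * exp (t^2 / 2)"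
    by (simp_all add: mult_exp_exp power2_eq_square)
  ultimately show "has_bochner_integral lborel (\<lambda>y. hermite_exp_residual K t y ^ 2 * \<phi> y)
      (exp (t^2) * (exp (t^2) - (\<Sum>n\<in>K. (t^2) ^ n / fact n)))"
    using assms
    by (simp add: hermite_exp_residual_def gauss_exp_poly_one gauss_exp_poly_hermite_exp_partial
        gauss_exp_poly_0_hermite_exp_partial_sq power2_eq_square algebra_simps)
qed

lemma chi2_density_finite:
  fixes p :: "real \<Rightarrow> real"
  assumes [measurable]: "p \<in> borel_measurable borel" and "chi2_density p < \<infinity>"
  shows "integrable lborel (\<lambda>y. (p y / \<phi> y - 1)^2 * \<phi> y)"
    and "chi2_density p = ennreal (\<integral>y. (p y / \<phi> y - 1)^2 * \<phi> y \<partial>lborel)"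
proof -
  have chi2_eq: "chi2_density p = (\<integral>\<^sup>+y. ennreal ((p y / \<phi> y - 1)^2 * \<phi> y) \<partial>lborel)"
    by (simp add: chi2_density_def std_normal_density_eq_normal_density)
  show integrable: "integrable lborel (\<lambda>y. (p y / \<phi> y - 1)^2 * \<phi> y)"
    using assms(2) by (intro integrableI_nonneg) (simp_all add: chi2_eq)
  show "chi2_density p = ennreal (\<integral>y. (p y / \<phi> y - 1)^2 * \<phi> y \<partial>lborel)"
    unfolding chi2_eq by (rule nn_integral_eq_integral[OF integrable]) simp
qed

lemma has_bochner_integral_mult_density:
  fixes p r :: "real \<Rightarrow> real"
  assumes [measurable]: "p \<in> borel_measurable borel" "r \<in> borel_measurable borel"
    and "integrable lborel (\<lambda>y. (p y / \<phi> y - 1)^2 * \<phi> y)"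
    and "integrable lborel (\<lambda>y. r y ^ 2 * \<phi> y)"
  shows "has_bochner_integral lborel (\<lambda>y. r y * p y)
    ((\<integral>y. r y * (p y / \<phi> y - 1) * \<phi> y \<partial>lborel) + (\<integral>y. r y * 1 * \<phi> y \<partial>lborel))"
proof -
  have "has_bochner_integral lborel (\<lambda>y. r y * (p y / \<phi> y - 1) * \<phi> y + r y * 1 * \<phi> y)
      ((\<integral>y. r y * (p y / \<phi> y - 1) * \<phi> y \<partial>lborel) + (\<integral>y. r y * 1 * \<phi> y \<partial>lborel))"
    using assms
    by (intro has_bochner_integral_add has_bochner_integral_integrable integrable_weighted_mult)
       auto
  moreover have "r y * (p y / \<phi> y - 1) * \<phi> y + r y * 1 * \<phi> y = r y * p y" for y
    using normal_density_pos[of 1 0 y] by (simp add: field_simps)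
  ultimately show ?thesis
    by simp
qed

lemma has_bochner_integral_exp_mult_density:
  fixes p :: "real \<Rightarrow> real" and K :: "nat set" and t :: real
  assumes [measurable]: "p \<in> borel_measurable borel"
    and chi2: "integrable lborel (\<lambda>y. (p y / \<phi> y - 1)^2 * \<phi> y)"
    and K: "finite K" "0 \<in> K"
    and hermite_moments: "\<And>n. n \<in> K \<Longrightarrow>
      (\<integral>y. poly (hermite_poly n) y * p y \<partial>lborel) = (if n = 0 then 1 else 0)"
  shows "has_bochner_integral lborel (\<lambda>y. exp (t * y) * p y) (exp (t^2 / 2) +
    (\<integral>y. hermite_exp_residual K t y * (p y / \<phi> y - 1) * \<phi> y \<partial>lborel))"
proof -
  let ?P = "hermite_exp_partial K t" and ?h = "hermite_exp_residual K t"
  have mult_p: "has_bochner_integral lborel (\<lambda>y. r y * p y)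
      ((\<integral>y. r y * (p y / \<phi> y - 1) * \<phi> y \<partial>lborel) + (\<integral>y. r y * 1 * \<phi> y \<partial>lborel))"
    if "r \<in> borel_measurable borel" "integrable lborel (\<lambda>y. r y ^ 2 * \<phi> y)" for r
    by (rule has_bochner_integral_mult_density[OF assms(1) that(1) chi2 that(2)])
  have exp_sq: "integrable lborel (\<lambda>y. exp (t * y) ^ 2 * \<phi> y)"
    using integrable_gauss_exp_poly[of "2 * t" 1]
    by (simp add: power2_eq_square mult_exp_exp mult_ac)
  have exp_p: "integrable lborel (\<lambda>y. exp (t * y) * p y)"
    using mult_p[OF _ exp_sq] by (auto intro: integrable.intros)
  have poly_p: "integrable lborel (\<lambda>y. poly q y * p y)" for q
    using mult_p[OF _ integrable_poly_sq_std_normal] by (auto intro: integrable.intros)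
  have "(\<integral>y. poly ?P y * p y \<partial>lborel) =
      (\<integral>y. (\<Sum>n\<in>K. t ^ n / fact n * (poly (hermite_poly n) y * p y)) \<partial>lborel)"
    by (simp add: hermite_exp_partial_def poly_sum sum_distrib_right mult.assoc)
  also have "\<dots> = (\<Sum>n\<in>K. t ^ n / fact n * (\<integral>y. poly (hermite_poly n) y * p y \<partial>lborel))"
    by (subst Bochner_Integration.integral_sum) (simp_all add: poly_p)
  also have "\<dots> = 1"
    using K by (simp add: hermite_moments if_distrib cong: if_cong)
  finally have "(\<integral>y. ?h y * p y \<partial>lborel) = (\<integral>y. exp (t * y) * p y \<partial>lborel) - exp (t^2 / 2)"
    using exp_p poly_p by (simp add: hermite_exp_residual_def left_diff_distrib mult.assoc)
  moreover have "(\<integral>y. ?h y * p y \<partial>lborel) = (\<integral>y. ?h y * (p y / \<phi> y - 1) * \<phi> y \<partial>lborel)"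
    using mult_p[OF _ integrable.intros[OF has_bochner_integral_hermite_exp_residual_sq[OF K]]]
      has_bochner_integral_hermite_exp_residual[OF K, of t]
    by (simp add: has_bochner_integral_iff)
  ultimately show ?thesis
    using exp_p by (simp add: has_bochner_integral_iff)
qed

lemma exp_moment_lt_of_chi2:
  fixes p :: "real \<Rightarrow> real" and K :: "nat set" and t :: real
  assumes [measurable]: "p \<in> borel_measurable borel"
    and chi2: "integrable lborel (\<lambda>y. (p y / \<phi> y - 1)^2 * \<phi> y)"
    and K: "finite K" "0 \<in> K"
    and hermite_moments: "\<And>n. n \<in> K \<Longrightarrow>
      (\<integral>y. poly (hermite_poly n) y * p y \<partial>lborel) = (if n = 0 then 1 else 0)"
    and small: "(\<integral>y. (p y / \<phi> y - 1)^2 * \<phi> y \<partial>lborel) *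
      (exp (t^2) - (\<Sum>n\<in>K. (t^2) ^ n / fact n)) < (exp (t^2 / 2) - 1)^2"
  shows "integrable lborel (\<lambda>y. exp (t * y) * p y)"
    and "(\<integral>y. exp (t * y) * p y \<partial>lborel) < exp (t^2)"
proof -
  define g where "g y = p y / \<phi> y - 1" for y
  let ?h = "hermite_exp_residual K t"
  note exp_p = has_bochner_integral_exp_mult_density[OF assms(1-5), of t, folded g_def]
  then show "integrable lborel (\<lambda>y. exp (t * y) * p y)"
    by (rule integrable.intros)
  have h2: "has_bochner_integral lborel (\<lambda>y. ?h y ^ 2 * \<phi> y)
      (exp (t^2) * (exp (t^2) - (\<Sum>n\<in>K. (t^2) ^ n / fact n)))"
    using K by (rule has_bochner_integral_hermite_exp_residual_sq)
  have exp_half_sq: "exp (t^2 / 2) ^ 2 = exp (t^2)"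
    by (simp add: power2_eq_square mult_exp_exp)
  have "(\<integral>y. ?h y * g y * \<phi> y \<partial>lborel)^2 \<le>
      (\<integral>y. ?h y ^ 2 * \<phi> y \<partial>lborel) * (\<integral>y. g y ^ 2 * \<phi> y \<partial>lborel)"
    using integrable.intros[OF h2] chi2
    by (intro Cauchy_Schwarz_weighted_integral) (simp_all add: g_def)
  also have "\<dots> = exp (t^2) * ((\<integral>y. g y ^ 2 * \<phi> y \<partial>lborel) *
      (exp (t^2) - (\<Sum>n\<in>K. (t^2) ^ n / fact n)))"
    using h2 by (simp add: has_bochner_integral_iff)
  also have "\<dots> < exp (t^2) * (exp (t^2 / 2) - 1)^2"
    using small by (simp add: g_def)
  also have "\<dots> = (exp (t^2 / 2) * (exp (t^2 / 2) - 1))^2"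
    by (simp add: power_mult_distrib exp_half_sq)
  finally have "(\<integral>y. ?h y * g y * \<phi> y \<partial>lborel) < exp (t^2 / 2) * (exp (t^2 / 2) - 1)"
    by (rule power_less_imp_less_base) simp
  with exp_p show "(\<integral>y. exp (t * y) * p y \<partial>lborel) < exp (t^2)"
    using exp_half_sq by (simp add: has_bochner_integral_iff power2_eq_square algebra_simps)
qed

lemma less_threshold_ratioD:
  fixes x C :: real and J :: "nat set"
  assumes "0 < x" "0 \<le> C" "ennreal C < threshold_ratio J x"
  shows "C * (exp x - 1 - (\<Sum>n. if n \<in> J then x ^ n / fact n else 0)) < (exp (x / 2) - 1)^2"
proof -
  define D where "D = exp x - 1 - (\<Sum>n. if n \<in> J then x ^ n / fact n else 0)"
  show ?thesis
  proof (fold D_def, cases "D = 0")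
    case True
    then show "C * D < (exp (x / 2) - 1)^2"
      using \<open>0 < x\<close> by simp
  next
    case False
    then have less: "C < (exp (x / 2) - 1)^2 / D"
      using assms(2,3) by (simp add: threshold_ratio_def D_def ennreal_less_iff)
    have "0 < D"
    proof (rule ccontr)
      assume "\<not> 0 < D"
      then have "(exp (x / 2) - 1)^2 / D \<le> 0"
        by (simp add: divide_nonneg_nonpos)
      with less \<open>0 \<le> C\<close> show False
        by simp
    qed
    with less show "C * D < (exp (x / 2) - 1)^2"
      by (simp add: pos_less_divide_eq)
  qed
qed

lemma threshold_ratio_truncation:
  fixes x C :: real and J :: "nat set"
  assumes "0 < x" "0 \<le> C" "ennreal C < threshold_ratio J x" "0 \<notin> J"
  obtains K where "finite K" "0 \<in> K" "K - {0} \<subseteq> J"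
    and "C * (exp x - (\<Sum>n\<in>K. x ^ n / fact n)) < (exp (x / 2) - 1)^2"
proof -
  define a where "a = (\<lambda>n. if n \<in> J then x ^ n / fact n else 0)"
  have "summable a"
    by (rule summable_comparison_test[OF _ summable_exp[of x]])
       (use \<open>0 < x\<close> in \<open>auto simp: a_def divide_inverse mult.commute\<close>)
  then have "(\<lambda>N. C * (exp x - 1 - (\<Sum>n<N. a n))) \<longlonglongrightarrow> C * (exp x - 1 - suminf a)"
    by (intro tendsto_intros summable_LIMSEQ)
  then have "eventually (\<lambda>N. C * (exp x - 1 - (\<Sum>n<N. a n)) < (exp (x / 2) - 1)^2) sequentially"
    using less_threshold_ratioD[OF assms(1-3)] by (intro order_tendstoD) (simp_all add: a_def)
  then obtain N where N: "C * (exp x - 1 - (\<Sum>n<N. a n)) < (exp (x / 2) - 1)^2"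
    by (auto simp: eventually_sequentially)
  show ?thesis
  proof (rule that[of "insert 0 (J \<inter> {..<N})"])
    have "(\<Sum>n<N. a n) = (\<Sum>n\<in>J \<inter> {..<N}. x ^ n / fact n)"
      by (simp add: a_def sum.If_cases Int_commute)
    with N \<open>0 \<notin> J\<close>
    show "C * (exp x - (\<Sum>n\<in>insert 0 (J \<inter> {..<N}). x ^ n / fact n)) < (exp (x / 2) - 1)^2"
      by (simp add: diff_diff_eq)
  qed auto
qed

theorem theorem9:
  fixes M :: "'a measure" and Y :: "'a \<Rightarrow> real" and p :: "real \<Rightarrow> real"
    and J :: "nat set"
  assumes "prob_space M"
    and "p \<in> borel_measurable borel" and "\<And>x. p x \<ge> 0"
    and "distributed M lborel Y (\<lambda>x. ennreal (p x))"
    and "chi2_density p < \<infinity>"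
    and "0 \<notin> J"
    and "\<And>n. n \<in> J \<Longrightarrow> prob_space.expectation M (\<lambda>\<omega>. hermite n (Y \<omega>)) = 0"
    and "chi2_density p < (INF x\<in>{0<..}. threshold_ratio J x)"
  shows "\<forall>t::real. t \<noteq> 0 \<longrightarrow> (\<integral>\<^sup>+ \<omega>. ennreal (exp (t * Y \<omega>)) \<partial>M) < ennreal (exp (t^2))"
proof (intro allI impI)
  fix t :: real
  assume "t \<noteq> 0"
  interpret prob_space M by fact
  define C where "C = (\<integral>y. (p y / \<phi> y - 1)^2 * \<phi> y \<partial>lborel)"
  have chi2: "integrable lborel (\<lambda>y. (p y / \<phi> y - 1)^2 * \<phi> y)" "chi2_density p = ennreal C"
    using chi2_density_finite[OF assms(2,5)] by (simp_all add: C_def)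
  have "(INF x\<in>{0<..}. threshold_ratio J x) \<le> threshold_ratio J (t^2)"
    using \<open>t \<noteq> 0\<close> by (intro INF_lower) simp
  with assms(8) chi2(2) have threshold: "ennreal C < threshold_ratio J (t^2)"
    by simp
  have "0 < t^2" "0 \<le> C"
    using \<open>t \<noteq> 0\<close> by (simp_all add: C_def integral_nonneg_AE)
  then obtain K where K: "finite K" "0 \<in> K" "K - {0} \<subseteq> J"
    and small: "C * (exp (t^2) - (\<Sum>n\<in>K. (t^2) ^ n / fact n)) < (exp (t^2 / 2) - 1)^2"
    using threshold assms(6) by (rule threshold_ratio_truncation)
  have "(\<integral>y. poly (hermite_poly n) y * p y \<partial>lborel) = (if n = 0 then 1 else 0)" if "n \<in> K" for n
  proof -
    have "(\<integral>y. poly (hermite_poly n) y * p y \<partial>lborel) = expectation (\<lambda>\<omega>. hermite n (Y \<omega>))"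
      using distributed_integral[OF assms(4), of "poly (hermite_poly n)"] assms(3)
      by (simp add: hermite_eq_poly mult.commute)
    with that K(3) assms(7) show ?thesis
      by (auto simp: hermite_eq_poly prob_space)
  qed
  note exp_moment = exp_moment_lt_of_chi2[OF assms(2) chi2(1) K(1,2) this small[unfolded C_def]]
  have "(\<integral>\<^sup>+ \<omega>. ennreal (exp (t * Y \<omega>)) \<partial>M) = ennreal (\<integral>y. exp (t * y) * p y \<partial>lborel)"
    using assms(3,4) exp_moment(1) by (intro nn_integral_distributed_eq_integral) auto
  with exp_moment(2) assms(3) show "(\<integral>\<^sup>+ \<omega>. ennreal (exp (t * Y \<omega>)) \<partial>M) < ennreal (exp (t^2))"
    by (simp add: ennreal_less_iff integral_nonneg_AE)
qed

end
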